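(* Let $\mathscr{P}$ be a stationary ergodic stochastic process over a finite alphabet $\Sigma$. The set $\overline{Q}^+$ of atomic accumulation causal states of $\mathscr{P}$ is closed under translation: if $\nu\in\overline{Q}^+$ and $\sigma\in\Sigma$ with $\nu(\sigma\Sigma^\omega)>0$, then $\nu_\sigma\in\overline{Q}^+$.
   Context: $\mathcal{M}_\Sigma$ denotes the set of probability measures on $\Sigma^\omega$ with the $\sigma$-field generated by the cylinders $x\Sigma^\omega$, $x\in\Sigma^\star$. For $x=\sigma_1\cdots\sigma_n$, $Pr(x)=Pr(X_1\cdots X_n=\sigma_1\cdots\sigma_n)$; for $Pr(x)>0$, $\mu_x\in\mathcal{M}_\Sigma$ is given by $\mu_x(y\Sigma^\omega)=Pr(xy)/Pr(x)$; causal states are the classes $[x]$ of sequences with $Pr(x)>0$ under $x\sim y\iff\mu_x=\mu_y$, and $\mu_{[x]}=\mu_x$. For $\nu\in\mathcal{M}_\Sigma$, $d\in\mathbb{N}^+$, $\varepsilon>0$: $B_{d,\varepsilon}(\nu)=\{\nu'\in\mathcal{M}_\Sigma:\sum_{x\in\Sigma^d}|\nu'(x\Sigma^\omega)-\nu(x\Sigma^\omega)|<\varepsilon\}$, and $p_{l,d,\varepsilon}(\nu)=\sum\{Pr(x):x\in\Sigma^l,\ Pr(x)>0,\ \mu_{[x]}\in B_{d,\varepsilon}(\nu)\}$. $\nu$ is an accumulation causal state if $p_{d,\varepsilon}(\nu):=\liminf_{l\to\infty}p_{l,d,\varepsilon}(\nu)>0$ for all $d,\varepsilon$; then $p(\nu)=\lim_{d\to\infty}\lim_{\varepsilon\to0}p_{d,\varepsilon}(\nu)$,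 and $\nu$ is atomic if $p(\nu)>0$. $\overline{Q}^+$ is the set of atomic accumulation causal states. For $\nu(\sigma\Sigma^\omega)>0$, the translation $\nu_\sigma\in\mathcal{M}_\Sigma$ is given by $\nu_\sigma(x\Sigma^\omega)=\nu(\sigma x\Sigma^\omega)/\nu(\sigma\Sigma^\omega)$. *)

theory Defs
  imports "HOL-Probability.Probability"
begin

definition SS :: "('a::finite) stream measure" where
  "SS = stream_space (count_space UNIV)"

definition cyl :: "('a::finite) list \<Rightarrow> 'a stream set" where
  "cyl x = {w \<in> space SS. stake (length x) w = x}"

definition MS :: "('a::finite) stream measure set" where
  "MS = {nu. prob_space nu \<and> sets nu = sets SS}"

definition cval :: "('a::finite) stream measure \<Rightarrow> 'a list \<Rightarrow> real" where
  "cval nu x = measure nu (cyl x)"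

text \<open>Conditional shifted measure: y Sigma^omega maps to nu(xy Sigma^omega)/nu(x Sigma^omega).
  For a process P, cshift P x is mu_x; for nu and a letter s, cshift nu [s] is the translation nu_s.\<close>
definition cshift :: "('a::finite) stream measure \<Rightarrow> 'a list \<Rightarrow> 'a stream measure" where
  "cshift nu x = distr (uniform_measure nu (cyl x)) SS (sdrop (length x))"

definition Ball_de :: "nat \<Rightarrow> real \<Rightarrow> ('a::finite) stream measure \<Rightarrow> 'a stream measure set" where
  "Ball_de d eps nu = {nu' \<in> MS.
     (\<Sum>x\<in>{x::'a list. length x = d}. \<bar>cval nu' x - cval nu x\<bar>) < eps}"

definition p_lde :: "('a::finite) stream measure \<Rightarrow> nat \<Rightarrow> nat \<Rightarrow> real \<Rightarrow> 'a stream measure \<Rightarrow> real" where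
  "p_lde P l d eps nu = (\<Sum>x\<in>{x::'a list. length x = l \<and> cval P x > 0 \<and> cshift P x \<in> Ball_de d eps nu}. cval P x)"

definition p_de :: "('a::finite) stream measure \<Rightarrow> nat \<Rightarrow> real \<Rightarrow> 'a stream measure \<Rightarrow> ereal" where
  "p_de P d eps nu = liminf (\<lambda>l. ereal (p_lde P l d eps nu))"

definition accumulation_cs :: "('a::finite) stream measure \<Rightarrow> 'a stream measure \<Rightarrow> bool" where
  "accumulation_cs P nu \<longleftrightarrow> nu \<in> MS \<and> (\<forall>d>0. \<forall>eps>0. p_de P d eps nu > 0)"

definition p_atom :: "('a::finite) stream measure \<Rightarrow> 'a stream measure \<Rightarrow> ereal" where
  "p_atom P nu = Lim sequentially (\<lambda>d. Lim (at_right 0) (\<lambda>eps. p_de P d eps nu))"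

definition Qplus :: "('a::finite) stream measure \<Rightarrow> 'a stream measure set" where
  "Qplus P = {nu. accumulation_cs P nu \<and> p_atom P nu > 0}"

definition stationary :: "('a::finite) stream measure \<Rightarrow> bool" where
  "stationary P \<longleftrightarrow> distr P SS stl = P"

definition ergodic :: "('a::finite) stream measure \<Rightarrow> bool" where
  "ergodic P \<longleftrightarrow> (\<forall>A\<in>sets SS. stl -` A \<inter> space SS = A \<longrightarrow>
      measure P A = 0 \<or> measure P A = 1)"

end

theory Submission
  imports Defs
begin

(* If mu_x is eps-close to nu on words of length d+1, then restricting to the words that
   start with s shows that Pr(xs)/Pr(x) = mu_x(s) exceeds nu(s)/2 and that mu_xs is
   4 eps/nu(s)-close to nu_s on words of length d.  Hence
   p_{l+1,d,eps'}(nu_s) >= nu(s)/2 p_{l,d+1,eps}(nu), and passing to the limits gives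
   p_{d,eps'}(nu_s) >= nu(s)/2 p(nu) > 0 for all d and eps', which makes nu_s an atomic
   accumulation causal state. *)

lemma space_SS [simp]: "space SS = UNIV"
  by (simp add: SS_def space_stream_space)

lemma cyl_in_sets_SS [measurable]: "cyl x \<in> sets SS"
proof -
  have "cyl x = stake (length x) -` {x} \<inter> space SS"
    by (auto simp: cyl_def)
  also have "\<dots> \<in> sets SS"
    unfolding SS_def by (rule measurable_sets[OF measurable_stake]) simp
  finally show ?thesis .
qed

lemma sdrop_measurable_SS [measurable]: "sdrop n \<in> SS \<rightarrow>\<^sub>M SS"
  by (simp add: SS_def)

lemma MS_D:
  assumes "mu \<in> MS"
  shows "prob_space mu" and "sets mu = sets SS"
  using assms by (auto simp: MS_def)

lemma cval_nonneg: "0 \<le> cval mu x"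
  by (simp add: cval_def)

lemma finite_words_of_length: "finite {w::'a::finite list. length w = d}"
  using finite_lists_length_eq[of "UNIV::'a set" d] by simp

lemma cyl_inter_sdrop_vimage: "cyl x \<inter> sdrop (length x) -` cyl y = cyl (x @ y)"
  by (auto simp: cyl_def simp flip: stake_add)

lemma cyl_eq_UN_extensions: "cyl x = (\<Union>w\<in>{w. length w = d}. cyl (x @ w))"
proof safe
  fix u assume "u \<in> cyl x"
  then have "u \<in> cyl (x @ stake d (sdrop (length x) u))"
    by (simp add: cyl_def flip: stake_add)
  then show "u \<in> (\<Union>w\<in>{w. length w = d}. cyl (x @ w))"
    by (rule UN_I[rotated]) simp
qed (use cyl_inter_sdrop_vimage in blast)

lemma cval_eq_sum_extensions:
  assumes "mu \<in> MS"
  shows "cval mu x = (\<Sum>w\<in>{w. length w = d}. cval mu (x @ w))"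
proof -
  interpret prob_space mu
    using MS_D[OF assms] by simp
  have "measure mu (\<Union>w\<in>{w. length w = d}. cyl (x @ w)) =
      (\<Sum>w\<in>{w. length w = d}. measure mu (cyl (x @ w)))"
  proof (rule measure_finite_Union)
    show "disjoint_family_on (\<lambda>w. cyl (x @ w)) {w. length w = d}"
      by (auto simp: disjoint_family_on_def cyl_def)
  qed (auto simp: finite_words_of_length MS_D(2)[OF assms])
  then show ?thesis
    by (simp add: cval_def flip: cyl_eq_UN_extensions)
qed

lemma
  assumes mu: "mu \<in> MS" and pos: "0 < cval mu x"
  shows cshift_in_MS: "cshift mu x \<in> MS"
    and cval_cshift: "cval (cshift mu x) y = cval mu (x @ y) / cval mu x"
proof -
  interpret prob_space mu
    using MS_D[OF mu] by simp
  have sets_mu: "sets mu = sets SS"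
    using MS_D[OF mu] by simp
  have ne0: "emeasure mu (cyl x) \<noteq> 0"
    using pos sets_mu by (simp add: cval_def emeasure_eq_measure)
  have sdrop_meas: "sdrop (length x) \<in> uniform_measure mu (cyl x) \<rightarrow>\<^sub>M SS"
    using sets_mu by (simp cong: measurable_cong_sets)
  show "cshift mu x \<in> MS"
    using prob_space.prob_space_distr[OF prob_space_uniform_measure[OF ne0] sdrop_meas]
    by (simp add: MS_def cshift_def emeasure_finite)
  have "cval (cshift mu x) y = measure (uniform_measure mu (cyl x)) (sdrop (length x) -` cyl y)"
    unfolding cval_def cshift_def using sdrop_meas
    by (simp add: measure_distr sets_eq_imp_space_eq[OF sets_mu])
  also have "\<dots> = measure mu (cyl x \<inter> sdrop (length x) -` cyl y) / measure mu (cyl x)"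
    using sets_mu measurable_sets[OF sdrop_measurable_SS cyl_in_sets_SS, of "length x" y]
    by (intro measure_uniform_measure[OF ne0]) simp_all
  finally show "cval (cshift mu x) y = cval mu (x @ y) / cval mu x"
    by (simp add: cval_def cyl_inter_sdrop_vimage)
qed

lemma Ball_de_Suc_subset:
  assumes nu: "nu \<in> MS"
  shows "Ball_de (Suc d) eps nu \<subseteq> Ball_de d eps nu"
proof
  fix mu assume mu_in: "mu \<in> Ball_de (Suc d) eps nu"
  then have mu: "mu \<in> MS"
    by (simp add: Ball_de_def)
  define f where "f z = \<bar>cval mu z - cval nu z\<bar>" for z
  have "(\<Sum>z | length z = d. f z) \<le>
      (\<Sum>z | length z = d. \<Sum>w | length w = 1. f (z @ w))"
  proof (rule sum_mono)
    fix z
    have "f z = \<bar>\<Sum>w | length w = 1. cval mu (z @ w) - cval nu (z @ w)\<bar>"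
      by (simp add: f_def cval_eq_sum_extensions[OF mu, of z 1]
          cval_eq_sum_extensions[OF nu, of z 1] sum_subtractf)
    also have "\<dots> \<le> (\<Sum>w | length w = 1. f (z @ w))"
      unfolding f_def by (rule sum_abs)
    finally show "f z \<le> (\<Sum>w | length w = 1. f (z @ w))" .
  qed
  also have "\<dots> = (\<Sum>(z, w) \<in> {z. length z = d} \<times> {w. length w = 1}. f (z @ w))"
    by (rule sum.cartesian_product)
  also have "\<dots> =
      (\<Sum>y\<in>(\<lambda>(z, w). z @ w) ` ({z. length z = d} \<times> {w. length w = 1}). f y)"
    by (subst sum.reindex) (auto simp: inj_on_def split_def)
  also have "(\<lambda>(z, w). z @ w) ` ({z. length z = d} \<times> {w. length w = 1}) =
      {y::'a list. length y = Suc d}"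
  proof (intro subset_antisym subsetI)
    fix y :: "'a list" assume "y \<in> {y. length y = Suc d}"
    then show "y \<in> (\<lambda>(z, w). z @ w) ` ({z. length z = d} \<times> {w. length w = 1})"
      by (intro image_eqI[of _ _ "(take d y, drop d y)"]) auto
  qed auto
  finally show "mu \<in> Ball_de d eps nu"
    using mu_in by (auto simp: Ball_de_def f_def)
qed

lemma Ball_de_mono: "eps \<le> eps' \<Longrightarrow> Ball_de d eps nu \<subseteq> Ball_de d eps' nu"
  by (auto simp: Ball_de_def)

lemma Ball_de_cong:
  assumes "mu \<in> Ball_de d eps nu" and "mu' \<in> MS" and "\<And>w. cval mu' w = cval mu w"
  shows "mu' \<in> Ball_de d eps nu"
  using assms by (simp add: Ball_de_def)

lemma sum_abs_diff_normalized_le: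
  fixes f g :: "'b \<Rightarrow> real"
  assumes g_nonneg: "\<And>w. w \<in> W \<Longrightarrow> 0 \<le> g w"
    and F_pos: "0 < sum f W" and G_pos: "0 < sum g W"
  shows "(\<Sum>w\<in>W. \<bar>f w / sum f W - g w / sum g W\<bar>) \<le>
    2 * (\<Sum>w\<in>W. \<bar>f w - g w\<bar>) / sum f W"
proof -
  define F G S where "F = sum f W" and "G = sum g W" and "S = (\<Sum>w\<in>W. \<bar>f w - g w\<bar>)"
  have "0 < F" "0 < G"
    using F_pos G_pos by (simp_all add: F_def G_def)
  have GF: "\<bar>G - F\<bar> \<le> S"
    unfolding F_def G_def S_def
    by (metis abs_minus_commute sum_abs sum_subtractf)
  have "\<bar>f w / F - g w / G\<bar> \<le> \<bar>f w - g w\<bar> / F + g w * \<bar>G - F\<bar> / (F * G)"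
    if "w \<in> W" for w
  proof -
    have "f w / F - g w / G = (f w - g w) / F + g w * (G - F) / (F * G)"
      using \<open>0 < F\<close> \<open>0 < G\<close> by (simp add: field_simps)
    then show ?thesis
      using \<open>0 < F\<close> \<open>0 < G\<close> g_nonneg[OF that]
      by (simp add: abs_mult abs_triangle_ineq[THEN order_trans])
  qed
  then have "(\<Sum>w\<in>W. \<bar>f w / F - g w / G\<bar>) \<le>
      (\<Sum>w\<in>W. \<bar>f w - g w\<bar> / F + g w * \<bar>G - F\<bar> / (F * G))"
    by (rule sum_mono)
  also have "\<dots> = S / F + \<bar>G - F\<bar> / F"
    using \<open>0 < G\<close> by (simp add: S_def G_def sum.distrib sum_divide_distrib[symmetric]
        sum_distrib_right[symmetric])
  also have "\<dots> \<le> 2 * S / F"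
    using GF \<open>0 < F\<close> by (simp add: divide_right_mono add_divide_distrib[symmetric])
  finally show ?thesis
    by (simp add: F_def G_def S_def)
qed

lemma translation_mem_Ball_de:
  fixes mu nu :: "('a::finite) stream measure"
  assumes mu_near: "mu \<in> Ball_de (Suc d) eps nu" and nu: "nu \<in> MS"
    and nu_s: "0 < cval nu [s]" and eps: "eps \<le> cval nu [s] / 2"
  shows "cval nu [s] / 2 < cval mu [s]"
    and "cshift mu [s] \<in> Ball_de d (4 * eps / cval nu [s]) (cshift nu [s])"
proof -
  have mu: "mu \<in> MS"
    using mu_near by (simp add: Ball_de_def)
  define W where "W = {w::'a list. length w = d}"
  define S where "S = (\<Sum>w\<in>W. \<bar>cval mu (s # w) - cval nu (s # w)\<bar>)"
  have "S = (\<Sum>z\<in>Cons s ` W. \<bar>cval mu z - cval nu z\<bar>)"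
    by (simp add: S_def sum.reindex)
  also have "\<dots> \<le> (\<Sum>z | length z = Suc d. \<bar>cval mu z - cval nu z\<bar>)"
    by (rule sum_mono2) (auto simp: W_def finite_words_of_length)
  also have "\<dots> < eps"
    using mu_near by (simp add: Ball_de_def)
  finally have S_less: "S < eps" .
  have S_nonneg: "0 \<le> S"
    by (simp add: S_def sum_nonneg)
  have sum_mu: "cval mu [s] = (\<Sum>w\<in>W. cval mu (s # w))"
    using cval_eq_sum_extensions[OF mu, of "[s]" d] by (simp add: W_def)
  have sum_nu: "cval nu [s] = (\<Sum>w\<in>W. cval nu (s # w))"
    using cval_eq_sum_extensions[OF nu, of "[s]" d] by (simp add: W_def)
  have "\<bar>cval mu [s] - cval nu [s]\<bar> \<le> S"
    unfolding sum_mu sum_nu S_def sum_subtractf[symmetric] by (rule sum_abs)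
  then show mu_s: "cval nu [s] / 2 < cval mu [s]"
    using S_less eps by linarith
  then have mu_s_pos: "0 < cval mu [s]"
    using nu_s by linarith
  have "(\<Sum>w\<in>W. \<bar>cval (cshift mu [s]) w - cval (cshift nu [s]) w\<bar>) \<le>
      2 * S / cval mu [s]"
    using sum_abs_diff_normalized_le[of W "\<lambda>w. cval nu (s # w)" "\<lambda>w. cval mu (s # w)"]
      mu_s_pos nu_s
    by (simp add: cval_cshift[OF mu mu_s_pos] cval_cshift[OF nu nu_s] cval_nonneg S_def
        flip: sum_mu sum_nu)
  also have "\<dots> < 2 * eps / cval mu [s]"
    using S_less mu_s_pos by (simp add: divide_strict_right_mono)
  also have "\<dots> \<le> 2 * eps / (cval nu [s] / 2)"
    using S_less S_nonneg mu_s mu_s_pos nu_s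
    by (intro divide_left_mono mult_pos_pos) simp_all
  finally show "cshift mu [s] \<in> Ball_de d (4 * eps / cval nu [s]) (cshift nu [s])"
    using cshift_in_MS[OF mu mu_s_pos] by (simp add: Ball_de_def W_def)
qed

lemma cval_cshift_cshift:
  assumes mu: "mu \<in> MS" and x_pos: "0 < cval mu x" and xy_pos: "0 < cval mu (x @ y)"
  shows "cval (cshift (cshift mu x) y) w = cval (cshift mu (x @ y)) w"
proof -
  have "0 < cval (cshift mu x) y"
    using x_pos xy_pos by (simp add: cval_cshift[OF mu x_pos])
  then show ?thesis
    using x_pos xy_pos
    by (simp add: cval_cshift[OF mu] cval_cshift[OF cshift_in_MS[OF mu x_pos]])
qed

lemma cshift_snoc_mem_Ball_de:
  fixes P nu :: "('a::finite) stream measure"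
  assumes P: "P \<in> MS" and x_pos: "0 < cval P x"
    and x_near: "cshift P x \<in> Ball_de (Suc d) eps nu"
    and nu: "nu \<in> MS" and nu_s: "0 < cval nu [s]" and eps: "eps \<le> cval nu [s] / 2"
  shows "cval nu [s] / 2 * cval P x < cval P (x @ [s])"
    and "0 < cval P (x @ [s])"
    and "cshift P (x @ [s]) \<in> Ball_de d (4 * eps / cval nu [s]) (cshift nu [s])"
proof -
  note translation = translation_mem_Ball_de[OF x_near nu nu_s eps]
  show xs_gt: "cval nu [s] / 2 * cval P x < cval P (x @ [s])"
    using translation(1) x_pos by (simp add: cval_cshift[OF P x_pos] field_simps)
  have "0 < cval nu [s] / 2 * cval P x"
    using nu_s x_pos by simp
  with xs_gt show xs_pos: "0 < cval P (x @ [s])"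
    by linarith
  from translation(2) xs_pos
  show "cshift P (x @ [s]) \<in> Ball_de d (4 * eps / cval nu [s]) (cshift nu [s])"
    by (rule Ball_de_cong[OF _ cshift_in_MS[OF P]])
      (simp add: cval_cshift_cshift[OF P x_pos xs_pos])
qed

lemma p_lde_translation_ge:
  fixes P nu :: "('a::finite) stream measure"
  assumes P: "P \<in> MS" and nu: "nu \<in> MS" and nu_s: "0 < cval nu [s]"
    and eps: "eps \<le> cval nu [s] / 2" and eps': "4 * eps / cval nu [s] \<le> eps'"
  shows "cval nu [s] / 2 * p_lde P l (Suc d) eps nu \<le>
    p_lde P (Suc l) d eps' (cshift nu [s])"
proof -
  define X where
    "X = {x. length x = l \<and> 0 < cval P x \<and> cshift P x \<in> Ball_de (Suc d) eps nu}"
  define Y where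
    "Y = {y. length y = Suc l \<and> 0 < cval P y \<and> cshift P y \<in> Ball_de d eps' (cshift nu [s])}"
  have snoc: "x @ [s] \<in> Y \<and> cval nu [s] / 2 * cval P x \<le> cval P (x @ [s])" if "x \<in> X" for x
  proof -
    have x_pos: "0 < cval P x" and x_near: "cshift P x \<in> Ball_de (Suc d) eps nu"
      using that by (simp_all add: X_def)
    show ?thesis
      using that cshift_snoc_mem_Ball_de[OF P x_pos x_near nu nu_s eps] Ball_de_mono[OF eps']
      by (auto simp: X_def Y_def)
  qed
  have "cval nu [s] / 2 * p_lde P l (Suc d) eps nu = (\<Sum>x\<in>X. cval nu [s] / 2 * cval P x)"
    by (simp add: p_lde_def X_def sum_distrib_left)
  also have "\<dots> \<le> (\<Sum>x\<in>X. cval P (x @ [s]))"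
    using snoc by (intro sum_mono) blast
  also have "\<dots> = (\<Sum>y\<in>(\<lambda>x. x @ [s]) ` X. cval P y)"
    by (simp add: sum.reindex inj_on_def)
  also have "\<dots> \<le> (\<Sum>y\<in>Y. cval P y)"
    using snoc by (intro sum_mono2) (auto simp: Y_def cval_nonneg
        intro: finite_subset[OF _ finite_words_of_length])
  also have "\<dots> = p_lde P (Suc l) d eps' (cshift nu [s])"
    by (simp add: p_lde_def Y_def)
  finally show ?thesis .
qed

lemma p_de_translation_ge:
  fixes P nu :: "('a::finite) stream measure"
  assumes P: "P \<in> MS" and nu: "nu \<in> MS" and nu_s: "0 < cval nu [s]"
    and eps: "eps \<le> cval nu [s] / 2" and eps': "4 * eps / cval nu [s] \<le> eps'"
  shows "ereal (cval nu [s] / 2) * p_de P (Suc d) eps nu \<le> p_de P d eps' (cshift nu [s])"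
proof -
  have "ereal (cval nu [s] / 2) * p_de P (Suc d) eps nu =
      liminf (\<lambda>l. ereal (cval nu [s] / 2) * ereal (p_lde P l (Suc d) eps nu))"
    unfolding p_de_def using nu_s by (subst Liminf_ereal_mult_left) auto
  also have "\<dots> \<le> liminf (\<lambda>l. ereal (p_lde P (l + 1) d eps' (cshift nu [s])))"
    using p_lde_translation_ge[OF assms] by (intro Liminf_mono) simp
  also have "\<dots> = p_de P d eps' (cshift nu [s])"
    unfolding p_de_def by (rule liminf_shift)
  finally show ?thesis .
qed

lemma p_de_mono:
  assumes "Ball_de d eps nu \<subseteq> Ball_de d' eps' nu"
  shows "p_de P d eps nu \<le> p_de P d' eps' nu"
proof -
  have "p_lde P l d eps nu \<le> p_lde P l d' eps' nu" for l
    unfolding p_lde_def using assms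
    by (intro sum_mono2)
      (auto simp: cval_nonneg intro: finite_subset[OF _ finite_words_of_length])
  then show ?thesis
    unfolding p_de_def by (intro Liminf_mono) simp
qed

lemma Lim_at_right_0_mono_eq_INF:
  fixes f :: "real \<Rightarrow> 'b::{complete_linorder, linorder_topology}"
  assumes mono: "\<And>e e'. 0 < e \<Longrightarrow> e \<le> e' \<Longrightarrow> f e \<le> f e'"
  shows "Lim (at_right 0) f = (INF e\<in>{0<..}. f e)"
proof (rule tendsto_Lim)
  show "(f \<longlongrightarrow> (INF e\<in>{0<..}. f e)) (at_right 0)"
  proof (rule decreasing_tendsto)
    show "\<forall>\<^sub>F e in at_right 0. (INF e\<in>{0<..}. f e) \<le> f e"
      by (rule eventually_mono[OF eventually_at_right_less]) (auto intro: INF_lower)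
    fix y assume "(INF e\<in>{0<..}. f e) < y"
    then obtain e0 where "0 < e0" "f e0 < y"
      by (auto simp: INF_less_iff)
    then show "\<forall>\<^sub>F e in at_right 0. f e < y"
      unfolding eventually_at_right_field using mono
      by (intro exI[of _ e0]) (meson le_less_trans less_imp_le)
  qed
qed simp

lemma p_atom_eq_INF:
  assumes nu: "nu \<in> MS"
  shows "p_atom P nu = (INF d. INF e\<in>{0<..}. p_de P d e nu)"
proof -
  have inner: "Lim (at_right 0) (\<lambda>e. p_de P d e nu) = (INF e\<in>{0<..}. p_de P d e nu)" for d
    by (intro Lim_at_right_0_mono_eq_INF p_de_mono Ball_de_mono)
  have "decseq (\<lambda>d. INF e\<in>{0<..}. p_de P d e nu)"
    using p_de_mono[OF Ball_de_Suc_subset[OF nu]] by (intro decseq_SucI INF_mono) blast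
  then show ?thesis
    unfolding p_atom_def inner by (intro tendsto_Lim LIMSEQ_INF) simp_all
qed

lemma p_atom_le_p_de: "nu \<in> MS \<Longrightarrow> 0 < eps \<Longrightarrow> p_atom P nu \<le> p_de P d eps nu"
  by (auto simp: p_atom_eq_INF intro: INF_lower2)

lemma p_atom_translation_le:
  fixes P nu :: "('a::finite) stream measure"
  assumes P: "P \<in> MS" and nu: "nu \<in> MS" and nu_s: "0 < cval nu [s]" and "0 < eps'"
  shows "ereal (cval nu [s] / 2) * p_atom P nu \<le> p_de P d eps' (cshift nu [s])"
proof -
  define eps where "eps = min (cval nu [s] / 2) (eps' * cval nu [s] / 4)"
  have "0 < eps" and eps: "eps \<le> cval nu [s] / 2"
    using nu_s \<open>0 < eps'\<close> by (simp_all add: eps_def)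
  have "4 * eps / cval nu [s] \<le> 4 * (eps' * cval nu [s] / 4) / cval nu [s]"
    using nu_s by (intro divide_right_mono) (auto simp: eps_def)
  then have eps': "4 * eps / cval nu [s] \<le> eps'"
    using nu_s by simp
  have "ereal (cval nu [s] / 2) * p_atom P nu \<le>
      ereal (cval nu [s] / 2) * p_de P (Suc d) eps nu"
    using nu_s p_atom_le_p_de[OF nu \<open>0 < eps\<close>] by (intro ereal_mult_left_mono) auto
  also have "\<dots> \<le> p_de P d eps' (cshift nu [s])"
    by (rule p_de_translation_ge[OF P nu nu_s eps eps'])
  finally show ?thesis .
qed

theorem mainTheorem4:
  fixes P nu :: "('a::finite) stream measure" and s :: 'a
  assumes "P \<in> MS" and "stationary P" and "ergodic P"
    and "nu \<in> Qplus P" and "cval nu [s] > 0"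
  shows "cshift nu [s] \<in> Qplus P"
proof -
  have nu: "nu \<in> MS" and "0 < p_atom P nu"
    using assms(4) by (simp_all add: Qplus_def accumulation_cs_def)
  define c where "c = ereal (cval nu [s] / 2)"
  have bound: "c * p_atom P nu \<le> p_de P d e (cshift nu [s])" if "0 < e" for d e
    unfolding c_def using p_atom_translation_le[OF assms(1) nu assms(5) that] .
  have pos: "0 < c * p_atom P nu"
    using assms(5) \<open>0 < p_atom P nu\<close> by (simp add: c_def ereal_zero_less_0_iff)
  have "accumulation_cs P (cshift nu [s])"
    using cshift_in_MS[OF nu assms(5)] pos bound
    by (auto simp: accumulation_cs_def intro: order.strict_trans2)
  moreover have "c * p_atom P nu \<le> p_atom P (cshift nu [s])"
    unfolding p_atom_eq_INF[OF cshift_in_MS[OF nu assms(5)]] using bound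
    by (intro INF_greatest) simp
  ultimately show ?thesis
    using pos by (auto simp: Qplus_def)
qed

end
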